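(* Let a discrete mean-field game (setting in the context) have reward $r(x,a,\mu)$ continuous in $\mu$. Run MF-PSRO(Nash): start with $\Pi_1=\{\pi_1\}$ for some $\pi_1\in\Pi$ and $\nu_1=\delta_{\pi_1}$; at step $n$, pick $\pi^{new}\in\arg\max_{\pi\in\Pi}J(\pi,\mu(\nu_n))$ and set $\Pi_{n+1}=\Pi_n\cup\{\pi^{new}\}$; if $\Pi_{n+1}=\Pi_n$ terminate, otherwise set $\nu_{n+1}\in\arg\min_{\nu\in\Delta(\Pi_{n+1})}\max_{\pi_i\in\Pi_{n+1}}\big(J(\pi_i,\mu(\nu))-J(\pi(\nu),\mu(\nu))\big)$ and continue. Then the algorithm terminates after finitely many steps, and the final $\nu_n$ yields a mean-field Nash equilibrium of the full game: $J(\pi,\mu(\nu_n))\le J(\pi(\nu_n),\mu(\nu_n))$ for all $\pi\in\Pi$.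
   Context: A discrete mean-field game consists of a finite state set $\mathcal X$, a finite action set $\mathcal A$, a reward $r:\mathcal X\times\mathcal A\times\Delta(\mathcal X)\to\mathbb R$, transition probabilities $p(x'\mid x,a)$ not depending on the population distribution, and an initial distribution $\mu_0\in\Delta(\mathcal X)$. A policy is a map $\pi:\mathcal X\to\Delta(\mathcal A)$; $\Pi$ is the finite set of deterministic policies. $\mu^\pi$ denotes the state occupancy measure of $\pi$ (either $\gamma$-discounted or finite-horizon with time in the state). The expected payoff is $J(\pi,\mu)=\sum_{x,a}\mu^\pi(x)\pi(x,a)r(x,a,\mu)$. For a distribution $\nu$ over a finite set of policies, $\mu(\nu)=\sum_\pi\nu(\pi)\mu^\pi$, and $\pi(\nu)$ is the policy that samples a policy from $\nu$ at the start and plays it throughout, so $J(\pi(\nu),\mu)=\sum_\pi\nu(\pi)J(\pi,\mu)$ and $\mu^{\pi(\nu)}=\mu(\nu)$. *)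

theory Defs
  imports "HOL-Analysis.Analysis"
begin

definition pdist :: "'b set \<Rightarrow> ('b \<Rightarrow> real) \<Rightarrow> bool" where
  "pdist S f \<longleftrightarrow> (\<forall>y. 0 \<le> f y) \<and> (\<forall>y. y \<notin> S \<longrightarrow> f y = 0) \<and> sum f S = 1"

text \<open>Standing assumptions on the game data: transition kernel p(x'|x,a) = p x a x',
  initial distribution mu0, discount factor gamma in [0,1).\<close>
definition mfg_data :: "('x::finite \<Rightarrow> 'a::finite \<Rightarrow> 'x \<Rightarrow> real) \<Rightarrow> ('x \<Rightarrow> real) \<Rightarrow> real \<Rightarrow> bool" where
  "mfg_data p mu0 gamma \<longleftrightarrow> (\<forall>x a. pdist UNIV (p x a)) \<and> pdist UNIV mu0 \<and> 0 \<le> gamma \<and> gamma < 1"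

primrec state_dist :: "('x::finite \<Rightarrow> 'a::finite \<Rightarrow> 'x \<Rightarrow> real) \<Rightarrow> ('x \<Rightarrow> real) \<Rightarrow> ('x \<Rightarrow> 'a) \<Rightarrow> nat \<Rightarrow> 'x \<Rightarrow> real" where
  "state_dist p mu0 pol 0 = mu0"
| "state_dist p mu0 pol (Suc t) = (\<lambda>x'. \<Sum>x\<in>UNIV. state_dist p mu0 pol t x * p x (pol x) x')"

definition occ :: "('x::finite \<Rightarrow> 'a::finite \<Rightarrow> 'x \<Rightarrow> real) \<Rightarrow> ('x \<Rightarrow> real) \<Rightarrow> real \<Rightarrow> ('x \<Rightarrow> 'a) \<Rightarrow> 'x \<Rightarrow> real" where
  "occ p mu0 gamma pol x = (1 - gamma) * (\<Sum>t. gamma ^ t * state_dist p mu0 pol t x)"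

definition mix_occ :: "('x::finite \<Rightarrow> 'a::finite \<Rightarrow> 'x \<Rightarrow> real) \<Rightarrow> ('x \<Rightarrow> real) \<Rightarrow> real \<Rightarrow> (('x \<Rightarrow> 'a) \<Rightarrow> real) \<Rightarrow> 'x \<Rightarrow> real" where
  "mix_occ p mu0 gamma nu x = (\<Sum>pol\<in>UNIV. nu pol * occ p mu0 gamma pol x)"

text \<open>J(pi, mu) for a deterministic policy pi (pi(x,a) = [pi x = a]).\<close>
definition payoff :: "('x::finite \<Rightarrow> 'a::finite \<Rightarrow> 'x \<Rightarrow> real) \<Rightarrow> ('x \<Rightarrow> real) \<Rightarrow> real \<Rightarrow> ('x \<Rightarrow> 'a \<Rightarrow> ('x \<Rightarrow> real) \<Rightarrow> real) \<Rightarrow> ('x \<Rightarrow> 'a) \<Rightarrow> ('x \<Rightarrow> real) \<Rightarrow> real" where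
  "payoff p mu0 gamma r pol mu = (\<Sum>x\<in>UNIV. \<Sum>a\<in>UNIV. occ p mu0 gamma pol x * (if pol x = a then 1 else 0) * r x a mu)"

definition payoff_mix :: "('x::finite \<Rightarrow> 'a::finite \<Rightarrow> 'x \<Rightarrow> real) \<Rightarrow> ('x \<Rightarrow> real) \<Rightarrow> real \<Rightarrow> ('x \<Rightarrow> 'a \<Rightarrow> ('x \<Rightarrow> real) \<Rightarrow> real) \<Rightarrow> (('x \<Rightarrow> 'a) \<Rightarrow> real) \<Rightarrow> ('x \<Rightarrow> real) \<Rightarrow> real" where
  "payoff_mix p mu0 gamma r nu mu = (\<Sum>pol\<in>UNIV. nu pol * payoff p mu0 gamma r pol mu)"

definition exploit :: "('x::finite \<Rightarrow> 'a::finite \<Rightarrow> 'x \<Rightarrow> real) \<Rightarrow> ('x \<Rightarrow> real) \<Rightarrow> real \<Rightarrow> ('x \<Rightarrow> 'a \<Rightarrow> ('x \<Rightarrow> real) \<Rightarrow> real) \<Rightarrow> ('x \<Rightarrow> 'a) set \<Rightarrow> (('x \<Rightarrow> 'a) \<Rightarrow> real) \<Rightarrow> real" where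
  "exploit p mu0 gamma r S nu =
     Max ((\<lambda>pol. payoff p mu0 gamma r pol (mix_occ p mu0 gamma nu)
                 - payoff_mix p mu0 gamma r nu (mix_occ p mu0 gamma nu)) ` S)"

end

theory Submission
  imports Defs
begin

text \<open>Every step that does not terminate adds a new deterministic policy, and there are only
  finitely many, so the algorithm stops at some N; then the best response to mu(nu_N) already
  lies in Pi_N. Restricted to Pi_N the game is a finite game whose payoffs are continuous in the
  mixed strategy, so Brouwer's theorem applied to Nash's map yields a distribution on Pi_N with
  exploitability at most 0. Since nu_N minimises the exploitability over Delta(Pi_N) (or is the
  point mass of the single policy when N = 1), its exploitability is at most 0 as well, and as
  it is measured against a global best response, nu_N is an equilibrium of the full game.\<close>

lemma pdist_UNIV: "pdist UNIV f \<longleftrightarrow> (\<forall>y. 0 \<le> f y) \<and> sum f UNIV = 1"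
  by (simp add: pdist_def)

lemma pdist_sum_UNIV:
  fixes w :: "'i::finite \<Rightarrow> real"
  assumes "pdist S w"
  shows "(\<Sum>i\<in>UNIV. w i * g i) = (\<Sum>i\<in>S. w i * g i)"
  using assms by (intro sum.mono_neutral_right) (auto simp: pdist_def)

lemma pdist_nonempty: "pdist S w \<Longrightarrow> S \<noteq> {}"
  by (auto simp: pdist_def)

lemma pdist_mixture:
  fixes w :: "'i::finite \<Rightarrow> real" and q :: "'i \<Rightarrow> 'j::finite \<Rightarrow> real"
  assumes w: "pdist S w" and q: "\<And>i. pdist UNIV (q i)"
  shows "pdist UNIV (\<lambda>y. \<Sum>i\<in>UNIV. w i * q i y)"
proof -
  have "(\<Sum>y\<in>UNIV. \<Sum>i\<in>UNIV. w i * q i y) = (\<Sum>i\<in>UNIV. w i * sum (q i) UNIV)"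
    by (subst sum.swap) (simp add: sum_distrib_left)
  also have "\<dots> = (\<Sum>i\<in>UNIV. w i * 1)"
    using q by (simp add: pdist_UNIV)
  also have "\<dots> = (\<Sum>i\<in>S. w i * 1)"
    by (rule pdist_sum_UNIV[OF w])
  also have "\<dots> = 1"
    using w by (simp add: pdist_def)
  finally show ?thesis
    using w q by (auto simp: pdist_UNIV pdist_def intro!: sum_nonneg)
qed

lemma state_dist_pdist:
  assumes "mfg_data p mu0 gamma"
  shows "pdist UNIV (state_dist p mu0 pol t)"
proof (induction t)
  case 0
  then show ?case using assms by (simp add: mfg_data_def)
next
  case (Suc t)
  then show ?case
    using assms by (simp add: mfg_data_def pdist_mixture)
qed

lemma pdist_le_1:
  assumes "pdist S f" "finite S"
  shows "f y \<le> 1"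
proof (cases "y \<in> S")
  case True
  then have "f y \<le> sum f S"
    using assms by (intro member_le_sum) (auto simp: pdist_def)
  then show ?thesis using assms by (simp add: pdist_def)
qed (use assms in \<open>simp add: pdist_def\<close>)

lemma summable_discounted_state_dist:
  assumes game: "mfg_data p mu0 gamma"
  shows "summable (\<lambda>t. gamma ^ t * state_dist p mu0 pol t x)"
proof (rule summable_comparison_test)
  have gamma: "0 \<le> gamma" "gamma < 1" using game by (auto simp: mfg_data_def)
  show "\<exists>N. \<forall>t\<ge>N. norm (gamma ^ t * state_dist p mu0 pol t x) \<le> gamma ^ t"
    using gamma state_dist_pdist[OF game] pdist_le_1[OF state_dist_pdist[OF game]]
    by (auto simp: abs_mult pdist_UNIV intro!: mult_left_le)
  show "summable (\<lambda>t. gamma ^ t)" using gamma by simp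
qed

lemma occ_pdist:
  assumes game: "mfg_data p mu0 gamma"
  shows "pdist UNIV (occ p mu0 gamma pol)"
proof -
  have gamma: "0 \<le> gamma" "gamma < 1" using game by (auto simp: mfg_data_def)
  note sd = state_dist_pdist[OF game, unfolded pdist_UNIV]
  have "(\<Sum>x\<in>UNIV. \<Sum>t. gamma ^ t * state_dist p mu0 pol t x)
      = (\<Sum>t. \<Sum>x\<in>UNIV. gamma ^ t * state_dist p mu0 pol t x)"
    by (rule suminf_sum[symmetric]) (rule summable_discounted_state_dist[OF game])
  also have "\<dots> = (\<Sum>t. gamma ^ t)"
    using sd by (simp add: sum_distrib_left[symmetric])
  also have "\<dots> = 1 / (1 - gamma)"
    using gamma by (intro suminf_geometric) auto
  finally have "sum (occ p mu0 gamma pol) UNIV = 1"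
    using gamma by (simp add: occ_def sum_distrib_left[symmetric])
  moreover have "0 \<le> occ p mu0 gamma pol x" for x
    unfolding occ_def using gamma sd summable_discounted_state_dist[OF game]
    by (intro mult_nonneg_nonneg suminf_nonneg) auto
  ultimately show ?thesis by (simp add: pdist_UNIV)
qed

lemma mix_occ_pdist:
  assumes "mfg_data p mu0 gamma" "pdist S nu"
  shows "pdist UNIV (mix_occ p mu0 gamma nu)"
  using pdist_mixture[OF assms(2) occ_pdist[OF assms(1)]] by (simp add: mix_occ_def[abs_def])

lemma pdist_support_le_average:
  fixes w f :: "'i \<Rightarrow> real"
  assumes w: "pdist S w" and "finite S"
  shows "\<exists>i\<in>S. 0 < w i \<and> f i \<le> (\<Sum>j\<in>S. w j * f j)"
proof (rule ccontr)
  assume "\<not> ?thesis"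
  then have above: "\<forall>i\<in>S. 0 < w i \<longrightarrow> (\<Sum>j\<in>S. w j * f j) < f i" by auto
  have w_nonneg: "\<forall>i. 0 \<le> w i" and w_sum: "sum w S = 1"
    using w by (auto simp: pdist_def)
  obtain k where k: "k \<in> S" "0 < w k"
    using w_nonneg w_sum by (metis less_eq_real_def sum.neutral zero_neq_one)
  have "(\<Sum>i\<in>S. w i * (\<Sum>j\<in>S. w j * f j)) < (\<Sum>i\<in>S. w i * f i)"
  proof (rule sum_strict_mono_ex1[OF \<open>finite S\<close>])
    show "\<forall>i\<in>S. w i * (\<Sum>j\<in>S. w j * f j) \<le> w i * f i"
      using above w_nonneg by (metis less_eq_real_def mult_left_mono mult_zero_left)
    show "\<exists>i\<in>S. w i * (\<Sum>j\<in>S. w j * f j) < w i * f i"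
      using above k by (meson mult_strict_left_mono)
  qed
  then show False
    using w_sum by (simp add: sum_distrib_right[symmetric])
qed

definition simplex_vec :: "'i set \<Rightarrow> (real ^ 'i::finite) set" where
  "simplex_vec S = {v. pdist S (vec_nth v)}"

lemma mem_simplex_vec:
  "v \<in> simplex_vec S \<longleftrightarrow> (\<forall>i. 0 \<le> v$i) \<and> (\<forall>i. i \<notin> S \<longrightarrow> v$i = 0) \<and> (\<Sum>i\<in>S. v$i) = 1"
  by (simp add: simplex_vec_def pdist_def)

lemma compact_simplex_vec: "compact (simplex_vec S)"
proof -
  have "simplex_vec S = (\<Inter>i. {v. 0 \<le> v$i}) \<inter> (\<Inter>i\<in>-S. {v. v$i = 0}) \<inter> {v. (\<Sum>i\<in>S. v$i) = 1}"
    by (auto simp: mem_simplex_vec)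
  then have closed: "closed (simplex_vec S)"
    by (auto intro!: closed_Int closed_INT closed_Collect_le closed_Collect_eq continuous_intros)
  have "norm v \<le> 1" if "v \<in> simplex_vec S" for v
  proof -
    have "norm v \<le> (\<Sum>i\<in>UNIV. \<bar>v$i\<bar>)" by (rule norm_le_l1_cart)
    also have "\<dots> = (\<Sum>i\<in>S. v$i)"
      using that by (intro sum.mono_neutral_cong_right) (auto simp: mem_simplex_vec)
    finally show ?thesis using that by (simp add: mem_simplex_vec)
  qed
  then have "bounded (simplex_vec S)" by (auto simp: bounded_iff)
  with closed show ?thesis by (simp add: compact_eq_bounded_closed)
qed

lemma convex_simplex_vec: "convex (simplex_vec S)"
proof (rule convexI)
  fix x y u v assume "x \<in> simplex_vec S" "y \<in> simplex_vec S" "0 \<le> (u::real)" "0 \<le> v" "u + v = 1"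
  moreover have "(\<Sum>i\<in>S. (u *\<^sub>R x + v *\<^sub>R y)$i) = u * (\<Sum>i\<in>S. x$i) + v * (\<Sum>i\<in>S. y$i)"
    by (simp add: sum.distrib sum_distrib_left)
  ultimately show "u *\<^sub>R x + v *\<^sub>R y \<in> simplex_vec S"
    by (auto simp: mem_simplex_vec)
qed

lemma simplex_vec_nonempty:
  assumes "i0 \<in> S"
  shows "simplex_vec S \<noteq> {}"
proof -
  have "(\<chi> i. if i = i0 then 1 else 0) \<in> simplex_vec S"
    using assms by (simp add: mem_simplex_vec)
  then show ?thesis by blast
qed

text \<open>Nash's improvement map from his 1951 existence proof.\<close>

definition nash_gain :: "'i set \<Rightarrow> (('i \<Rightarrow> real) \<Rightarrow> 'i \<Rightarrow> real) \<Rightarrow> real ^ 'i::finite \<Rightarrow> 'i \<Rightarrow> real" where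
  "nash_gain S F v i =
     (if i \<in> S then max 0 (F (vec_nth v) i - (\<Sum>j\<in>S. v$j * F (vec_nth v) j)) else 0)"

definition nash_map :: "'i set \<Rightarrow> (('i \<Rightarrow> real) \<Rightarrow> 'i \<Rightarrow> real) \<Rightarrow> real ^ 'i::finite \<Rightarrow> real ^ 'i" where
  "nash_map S F v = (\<chi> i. (v$i + nash_gain S F v i) / (1 + (\<Sum>j\<in>S. nash_gain S F v j)))"

lemma nash_gain_nonneg: "0 \<le> nash_gain S F v i"
  by (simp add: nash_gain_def)

lemma total_nash_gain_nonneg: "0 \<le> (\<Sum>j\<in>S. nash_gain S F v j)"
  by (intro sum_nonneg nash_gain_nonneg)

lemma nash_map_in_simplex_vec:
  assumes v: "v \<in> simplex_vec S"
  shows "nash_map S F v \<in> simplex_vec S"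
proof -
  have pos: "0 < 1 + (\<Sum>j\<in>S. nash_gain S F v j)"
    using total_nash_gain_nonneg[of S F v] by linarith
  have "(\<Sum>i\<in>S. nash_map S F v $ i)
      = (\<Sum>i\<in>S. v$i + nash_gain S F v i) / (1 + (\<Sum>j\<in>S. nash_gain S F v j))"
    by (simp add: nash_map_def sum_divide_distrib)
  also have "\<dots> = 1"
    using v pos by (simp add: sum.distrib mem_simplex_vec)
  finally show ?thesis
    using v pos nash_gain_nonneg[of S F v]
    by (auto simp: mem_simplex_vec nash_map_def nash_gain_def)
qed

lemma continuous_on_nash_map:
  fixes S :: "'i::finite set"
  assumes contF: "\<And>i. continuous_on {w. pdist S w} (\<lambda>w. F w i)"
  shows "continuous_on (simplex_vec S) (nash_map S F)"
proof -
  have "continuous_on (simplex_vec S) (vec_nth :: real ^ 'i \<Rightarrow> 'i \<Rightarrow> real)"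
    by (intro continuous_on_coordinatewise_then_product continuous_intros)
  then have contF': "continuous_on (simplex_vec S) (\<lambda>v. F (vec_nth v) i)" for i
    by (rule continuous_on_compose2[OF contF]) (auto simp: simplex_vec_def)
  have "continuous_on (simplex_vec S) (\<lambda>v. nash_gain S F v i)" for i
    unfolding nash_gain_def by (cases "i \<in> S") (auto intro!: continuous_intros contF')
  moreover have "1 + (\<Sum>j\<in>S. nash_gain S F v j) \<noteq> 0" for v
    using total_nash_gain_nonneg[of S F v] by linarith
  ultimately show ?thesis
    unfolding nash_map_def by (intro continuous_intros) auto
qed

text \<open>At a fixed point some strategy in the support gains nothing, which forces the total
  gain, and with it every single gain, to vanish.\<close>

lemma nash_map_fixed_point:
  assumes v: "v \<in> simplex_vec S" and fixed: "nash_map S F v = v"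
  shows "\<forall>i\<in>S. F (vec_nth v) i \<le> (\<Sum>j\<in>S. v$j * F (vec_nth v) j)"
proof -
  define G where "G = (\<Sum>j\<in>S. nash_gain S F v j)"
  have pos: "0 < 1 + G"
    using total_nash_gain_nonneg[of S F v] by (simp add: G_def)
  have gain: "nash_gain S F v i = v$i * G" for i
  proof -
    have "v$i = nash_map S F v $ i"
      using fixed by simp
    also have "\<dots> = (v$i + nash_gain S F v i) / (1 + G)"
      by (simp add: nash_map_def G_def)
    finally have "v$i = (v$i + nash_gain S F v i) / (1 + G)" .
    then show ?thesis using pos by (simp add: field_simps)
  qed
  have "pdist S (vec_nth v)"
    using v by (simp add: simplex_vec_def)
  then obtain i where i: "i \<in> S" "0 < v$i" "F (vec_nth v) i \<le> (\<Sum>j\<in>S. v$j * F (vec_nth v) j)"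
    using pdist_support_le_average[OF _ finite, of S "vec_nth v" "F (vec_nth v)"] by blast
  then have "G = 0"
    using gain[of i] by (simp add: nash_gain_def)
  then have "\<forall>j\<in>S. nash_gain S F v j = 0"
    using gain by simp
  then show ?thesis
    by (auto simp: nash_gain_def)
qed

theorem nash_equilibrium_exists:
  fixes S :: "'i::finite set" and F :: "('i \<Rightarrow> real) \<Rightarrow> 'i \<Rightarrow> real"
  assumes "S \<noteq> {}" and contF: "\<And>i. continuous_on {w. pdist S w} (\<lambda>w. F w i)"
  shows "\<exists>w. pdist S w \<and> (\<forall>i\<in>S. F w i \<le> (\<Sum>j\<in>S. w j * F w j))"
proof -
  obtain i0 where "i0 \<in> S" using \<open>S \<noteq> {}\<close> by blast
  have "nash_map S F \<in> simplex_vec S \<rightarrow> simplex_vec S"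
    using nash_map_in_simplex_vec by blast
  then obtain v where v: "v \<in> simplex_vec S" "nash_map S F v = v"
    by (rule brouwer[OF compact_simplex_vec convex_simplex_vec simplex_vec_nonempty[OF \<open>i0 \<in> S\<close>]
        continuous_on_nash_map[OF contF]])
  show ?thesis
  proof (intro exI conjI)
    show "pdist S (vec_nth v)" using v(1) by (simp add: simplex_vec_def)
    show "\<forall>i\<in>S. F (vec_nth v) i \<le> (\<Sum>j\<in>S. v$j * F (vec_nth v) j)"
      by (rule nash_map_fixed_point[OF v])
  qed
qed


lemma continuous_on_mix_occ: "continuous_on UNIV (mix_occ p mu0 gamma)"
proof -
  have "continuous_on UNIV (\<lambda>nu. mix_occ p mu0 gamma nu x)" for x
    unfolding mix_occ_def
    by (intro continuous_on_sum continuous_on_mult_right continuous_on_product_coordinates)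
  then show ?thesis by (intro continuous_on_coordinatewise_then_product) simp
qed

lemma continuous_on_payoff_mix_occ:
  assumes game: "mfg_data p mu0 gamma"
    and cont: "\<forall>x a. continuous_on {mu. pdist UNIV mu} (r x a)"
  shows "continuous_on {nu. pdist S nu} (\<lambda>nu. payoff p mu0 gamma r pol (mix_occ p mu0 gamma nu))"
proof -
  have "continuous_on {nu. pdist S nu} (\<lambda>nu. r x a (mix_occ p mu0 gamma nu))" for x a
    by (rule continuous_on_compose2[OF cont[rule_format] continuous_on_subset[OF continuous_on_mix_occ]])
      (auto intro: mix_occ_pdist[OF game])
  then show ?thesis
    unfolding payoff_def by (intro continuous_intros)
qed

lemma payoff_mix_eq_sum:
  assumes "pdist S nu"
  shows "payoff_mix p mu0 gamma r nu mu = (\<Sum>pol\<in>S. nu pol * payoff p mu0 gamma r pol mu)"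
  unfolding payoff_mix_def by (rule pdist_sum_UNIV[OF assms])

lemma payoff_mix_point_mass:
  "payoff_mix p mu0 gamma r (\<lambda>pol. if pol = q then 1 else 0) mu = payoff p mu0 gamma r q mu"
  unfolding payoff_mix_def by (simp add: if_distrib[of "\<lambda>c. c * _"] cong: if_cong)

lemma payoff_gain_le_exploit:
  assumes "pol \<in> S"
  shows "payoff p mu0 gamma r pol (mix_occ p mu0 gamma nu)
           - payoff_mix p mu0 gamma r nu (mix_occ p mu0 gamma nu)
         \<le> exploit p mu0 gamma r S nu"
  unfolding exploit_def using assms by (intro Max_ge) auto

lemma exploit_le_iff:
  assumes "S \<noteq> {}"
  shows "exploit p mu0 gamma r S nu \<le> c \<longleftrightarrow>
    (\<forall>pol\<in>S. payoff p mu0 gamma r pol (mix_occ p mu0 gamma nu)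
               - payoff_mix p mu0 gamma r nu (mix_occ p mu0 gamma nu) \<le> c)"
  unfolding exploit_def using assms by (simp add: Max_le_iff)

lemma exists_exploit_nonpos:
  assumes game: "mfg_data p mu0 gamma"
    and cont: "\<forall>x a. continuous_on {mu. pdist UNIV mu} (r x a)"
    and "S \<noteq> {}"
  shows "\<exists>nu. pdist S nu \<and> exploit p mu0 gamma r S nu \<le> 0"
proof -
  obtain nu where nu: "pdist S nu"
    "\<forall>pol\<in>S. payoff p mu0 gamma r pol (mix_occ p mu0 gamma nu)
       \<le> (\<Sum>j\<in>S. nu j * payoff p mu0 gamma r j (mix_occ p mu0 gamma nu))"
    using nash_equilibrium_exists[where F = "\<lambda>nu pol. payoff p mu0 gamma r pol (mix_occ p mu0 gamma nu)",
        OF \<open>S \<noteq> {}\<close> continuous_on_payoff_mix_occ[OF game cont]]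
    by blast
  then have "exploit p mu0 gamma r S nu \<le> 0"
    using \<open>S \<noteq> {}\<close> by (simp add: exploit_le_iff payoff_mix_eq_sum)
  with nu show ?thesis by blast
qed

lemma exploit_minimiser_nonpos:
  assumes game: "mfg_data p mu0 gamma"
    and cont: "\<forall>x a. continuous_on {mu. pdist UNIV mu} (r x a)"
    and nu: "pdist S nu"
    and minimal: "\<forall>nu'. pdist S nu' \<longrightarrow> exploit p mu0 gamma r S nu \<le> exploit p mu0 gamma r S nu'"
  shows "exploit p mu0 gamma r S nu \<le> 0"
  using exists_exploit_nonpos[OF game cont pdist_nonempty[OF nu]] minimal by force

lemma nash_of_exploit_nonpos:
  assumes "b \<in> S"
    and best: "\<forall>pol. payoff p mu0 gamma r pol (mix_occ p mu0 gamma nu)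
                     \<le> payoff p mu0 gamma r b (mix_occ p mu0 gamma nu)"
    and "exploit p mu0 gamma r S nu \<le> 0"
  shows "\<forall>pol. payoff p mu0 gamma r pol (mix_occ p mu0 gamma nu)
               \<le> payoff_mix p mu0 gamma r nu (mix_occ p mu0 gamma nu)"
  using payoff_gain_le_exploit[OF \<open>b \<in> S\<close>, of p mu0 gamma r nu] assms(3) best
  by (meson diff_le_0_iff_le order_trans)

lemma no_infinite_psubset_chain:
  fixes P :: "nat \<Rightarrow> 'b::finite set"
  shows "\<not> (\<forall>n\<ge>k. P n \<subset> P (Suc n))"
proof
  assume chain: "\<forall>n\<ge>k. P n \<subset> P (Suc n)"
  have "m \<le> card (P (k + m))" for m
  proof (induction m)
    case (Suc m)
    have "card (P (k + m)) < card (P (k + Suc m))"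
      using chain by (simp add: psubset_card_mono)
    with Suc show ?case by simp
  qed simp
  moreover have "card (P (k + Suc CARD('b))) \<le> CARD('b)"
    by (rule card_mono) auto
  ultimately show False
    by (metis not_less_eq_eq)
qed

lemma insertion_process_stops:
  fixes P :: "nat \<Rightarrow> 'b::finite set"
  assumes grow: "\<forall>n\<ge>1. (\<forall>m\<in>{1..<n}. P (Suc m) \<noteq> P m) \<longrightarrow> P (Suc n) = insert (q n) (P n)"
  shows "\<exists>N\<ge>1. (\<forall>m\<in>{1..<N}. P (Suc m) \<noteq> P m) \<and> P (Suc N) = P N"
proof -
  have "\<exists>n\<ge>1. P (Suc n) = P n"
  proof (rule ccontr)
    assume "\<not> ?thesis"
    then have "P n \<subset> P (Suc n)" if "n \<ge> 1" for n
      using grow that by auto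
    then show False
      using no_infinite_psubset_chain by blast
  qed
  then obtain N where "N \<ge> 1" "P (Suc N) = P N" "\<forall>m<N. \<not> (m \<ge> 1 \<and> P (Suc m) = P m)"
    using exists_least_iff[of "\<lambda>n. n \<ge> 1 \<and> P (Suc n) = P n"] by blast
  then show ?thesis
    by auto
qed

theorem mainTheorem3:
  fixes p :: "'x::finite \<Rightarrow> 'a::finite \<Rightarrow> 'x \<Rightarrow> real"
    and mu0 :: "'x \<Rightarrow> real" and gamma :: real
    and r :: "'x \<Rightarrow> 'a \<Rightarrow> ('x \<Rightarrow> real) \<Rightarrow> real"
    and pi1 :: "'x \<Rightarrow> 'a"
    and P :: "nat \<Rightarrow> ('x \<Rightarrow> 'a) set"
    and nu :: "nat \<Rightarrow> ('x \<Rightarrow> 'a) \<Rightarrow> real"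
    and pnew :: "nat \<Rightarrow> 'x \<Rightarrow> 'a"
  assumes game: "mfg_data p mu0 gamma"
    and cont: "\<forall>x a. continuous_on {mu. pdist UNIV mu} (r x a)"
    and init_P: "P 1 = {pi1}"
    and init_nu: "nu 1 = (\<lambda>pol. if pol = pi1 then 1 else 0)"
    and step: "\<forall>n\<ge>1. (\<forall>m\<in>{1..<n}. P (Suc m) \<noteq> P m) \<longrightarrow>
       ((\<forall>pol. payoff p mu0 gamma r pol (mix_occ p mu0 gamma (nu n))
               \<le> payoff p mu0 gamma r (pnew n) (mix_occ p mu0 gamma (nu n)))
        \<and> P (Suc n) = insert (pnew n) (P n)
        \<and> (P (Suc n) \<noteq> P n \<longrightarrow>
             pdist (P (Suc n)) (nu (Suc n)) \<and>
             (\<forall>nu'. pdist (P (Suc n)) nu' \<longrightarrow>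
                exploit p mu0 gamma r (P (Suc n)) (nu (Suc n))
                  \<le> exploit p mu0 gamma r (P (Suc n)) nu')))"
  shows "\<exists>N\<ge>1. (\<forall>m\<in>{1..<N}. P (Suc m) \<noteq> P m) \<and> P (Suc N) = P N \<and>
           (\<forall>pol. payoff p mu0 gamma r pol (mix_occ p mu0 gamma (nu N))
                  \<le> payoff_mix p mu0 gamma r (nu N) (mix_occ p mu0 gamma (nu N)))"
proof -
  have "\<forall>n\<ge>1. (\<forall>m\<in>{1..<n}. P (Suc m) \<noteq> P m) \<longrightarrow> P (Suc n) = insert (pnew n) (P n)"
    using step by blast
  then obtain N where N: "N \<ge> 1" "P (Suc N) = P N"
    and running: "\<forall>m\<in>{1..<N}. P (Suc m) \<noteq> P m"
    using insertion_process_stops by blast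
  from step[THEN spec, of N, THEN mp, OF N(1), THEN mp, OF running]
  have best: "\<forall>pol. payoff p mu0 gamma r pol (mix_occ p mu0 gamma (nu N))
                       \<le> payoff p mu0 gamma r (pnew N) (mix_occ p mu0 gamma (nu N))"
    and "pnew N \<in> P N"
    using N(2) by auto
  have "exploit p mu0 gamma r (P N) (nu N) \<le> 0"
  proof (cases "N = 1")
    case True
    then show ?thesis
      using init_P init_nu by (simp add: exploit_def payoff_mix_point_mass)
  next
    case False
    then obtain n where n: "N = Suc n" "n \<ge> 1"
      using N(1) by (cases N) auto
    then have "\<forall>m\<in>{1..<n}. P (Suc m) \<noteq> P m" "P (Suc n) \<noteq> P n"
      using running by auto
    with step n(2) have "pdist (P N) (nu N)"
      "\<forall>nu'. pdist (P N) nu' \<longrightarrow> exploit p mu0 gamma r (P N) (nu N) \<le> exploit p mu0 gamma r (P N) nu'"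
      unfolding n(1) by blast+
    then show ?thesis
      by (rule exploit_minimiser_nonpos[OF game cont])
  qed
  then show ?thesis
    using N running nash_of_exploit_nonpos[OF \<open>pnew N \<in> P N\<close> best] by blast
qed

end
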